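(* Let $q\ge 2$ and let $f:H(2,q)\to\mathbb{R}$ be an additive function with $|S(f)|\le 2(q-1)$. Then one of the following holds: (1) $f\equiv 0$; (2) there exist $i\in\{1,2\}$, $k\in\{0,\dots,q-1\}$ and a constant $c\neq 0$ such that $f(x)=c$ for $x\in T_k(i,2)$ and $f(x)=0$ otherwise; (3) there exist $i\ne j$ in $\{1,2\}$, $k,m\in\{0,\dots,q-1\}$ and a constant $c\ne 0$ such that $f(x)=c$ for $x\in T_k(i,2)\setminus T_m(j,2)$, $f(x)=-c$ for $x\in T_m(j,2)\setminus T_k(i,2)$, and $f(x)=0$ otherwise.
   Context: The Hamming graph $H(N,q)$ has vertex set $\{0,1,\dots,q-1\}^N$, two words being adjacent iff they differ in exactly one coordinate. For $f:H(N,q)\to\mathbb{R}$, its support is $S(f)=\{x: f(x)\ne 0\}$. $T_k(i,N)$ denotes the set of vertices of $H(N,q)$ whose $i$-th coordinate equals $k$. For $f:H(N,q)\to\mathbb{R}$ ($N\ge1$), $i\in\{1,\dots,N\}$ and $k,m\in\{0,\dots,q-1\}$, define $g_{i,k,m}:H(N-1,q)\to\mathbb{R}$ by $g_{i,k,m}(t)=f(x)-f(y)$, where $x$ and $y$ are obtained from $t$ by inserting $k$, resp. $m$, as the $i$-th coordinate. The function $f$ is called additive if all functions $g_{i,k,m}$ are constant. *)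

theory Defs
  imports Main "HOL.Real"
begin

text \<open>Vertices of the Hamming graph H(N,q): words of length N over {0,...,q-1},
  represented as lists. Coordinates are numbered 1..N (coordinate i is list index i-1).\<close>
definition hamming_vertices :: "nat \<Rightarrow> nat \<Rightarrow> nat list set" where
  "hamming_vertices N q = {x. length x = N \<and> set x \<subseteq> {..<q}}"

definition insert_coord :: "nat \<Rightarrow> nat \<Rightarrow> nat list \<Rightarrow> nat list" where
  "insert_coord i k t = take (i - 1) t @ [k] @ drop (i - 1) t"

definition g_fun :: "(nat list \<Rightarrow> real) \<Rightarrow> nat \<Rightarrow> nat \<Rightarrow> nat \<Rightarrow> nat list \<Rightarrow> real" where
  "g_fun f i k m t = f (insert_coord i k t) - f (insert_coord i m t)"

definition additive :: "nat \<Rightarrow> nat \<Rightarrow> (nat list \<Rightarrow> real) \<Rightarrow> bool" where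
  "additive N q f \<longleftrightarrow> (\<forall>i\<in>{1..N}. \<forall>k<q. \<forall>m<q. \<exists>c. \<forall>t\<in>hamming_vertices (N - 1) q. g_fun f i k m t = c)"

definition support :: "nat \<Rightarrow> nat \<Rightarrow> (nat list \<Rightarrow> real) \<Rightarrow> nat list set" where
  "support N q f = {x \<in> hamming_vertices N q. f x \<noteq> 0}"

definition T :: "nat \<Rightarrow> nat \<Rightarrow> nat \<Rightarrow> nat \<Rightarrow> nat list set" where
  "T q k i N = {x \<in> hamming_vertices N q. x ! (i - 1) = k}"

end

theory Submission
  imports Defs
begin

text \<open>
  On \<open>H(2,q)\<close> additivity means \<open>f [a, b] = u a + v b\<close>. Count the support column by
  column. If \<open>u\<close> is not constant, every column meets the support, and since there are
  fewer than \<open>2q\<close> support points some column meets it exactly once; hence \<open>u\<close> is constant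
  except at a single point \<open>a1\<close>, and likewise \<open>v\<close> except at \<open>b1\<close>. Then \<open>f\<close> is a constant
  \<open>\<sigma>\<close> plus a spike on row \<open>a1\<close> plus a spike on column \<open>b1\<close>. If \<open>\<sigma> \<noteq> 0\<close>, both
  arms of the cross must vanish (otherwise more than \<open>q(q-1)\<close> points are in the support),
  so the corner equals \<open>-\<sigma>\<close>; with the \<open>(q-1)\<^sup>2\<close> points off the cross this forces
  \<open>q = 2\<close>, where the spike of \<open>u\<close> can be moved to the other index to make
  \<open>\<sigma> = 0\<close>. If \<open>\<sigma> = 0\<close>, the two arms of the cross already contain \<open>2(q-1)\<close> support
  points, so the corner vanishes and \<open>f\<close> has the shape (3). A constant \<open>u\<close> or \<open>v\<close>
  gives (1) or (2) directly.
\<close>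

definition sum_support :: "nat \<Rightarrow> (nat \<Rightarrow> real) \<Rightarrow> (nat \<Rightarrow> real) \<Rightarrow> (nat \<times> nat) set" where
  "sum_support q u v = {(a, b). a < q \<and> b < q \<and> u a + v b \<noteq> 0}"

lemma card_sum_support_commute: "card (sum_support q u v) = card (sum_support q v u)"
proof -
  have "sum_support q v u = prod.swap ` sum_support q u v"
    by (auto simp: sum_support_def add.commute image_iff)
  then show ?thesis by (simp add: card_image)
qed

lemma card_sum_support_columns:
  "card (sum_support q u v) = (\<Sum>b<q. card {a. a < q \<and> u a + v b \<noteq> 0})"
proof -
  have "sum_support q u v = prod.swap ` Sigma {..<q} (\<lambda>b. {a. a < q \<and> u a + v b \<noteq> 0})"
    by (auto simp: sum_support_def image_iff)
  then have "card (sum_support q u v) = card (Sigma {..<q} (\<lambda>b. {a. a < q \<and> u a + v b \<noteq> 0}))"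
    by (simp add: card_image)
  then show ?thesis by (simp add: card_SigmaI)
qed

lemma card_sum_support_ge:
  assumes "b1 < q"
    and "\<And>b. b < q \<Longrightarrow> b \<noteq> b1 \<Longrightarrow> n \<le> card {a. a < q \<and> u a + v b \<noteq> 0}"
    and "m \<le> card {a. a < q \<and> u a + v b1 \<noteq> 0}"
  shows "(q - 1) * n + m \<le> card (sum_support q u v)"
proof -
  let ?C = "\<lambda>b. card {a. a < q \<and> u a + v b \<noteq> 0}"
  have "(q - 1) * n \<le> (\<Sum>b\<in>{..<q} - {b1}. ?C b)"
    using sum_bounded_below[of "{..<q} - {b1}" n ?C] assms(1,2) by simp
  moreover have "(\<Sum>b<q. ?C b) = ?C b1 + (\<Sum>b\<in>{..<q} - {b1}. ?C b)"
    using assms(1) by (simp add: sum.remove)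
  ultimately show ?thesis
    using assms(3) by (simp add: card_sum_support_columns)
qed

lemma card_column_ge_one:
  fixes u :: "nat \<Rightarrow> real"
  assumes "a < q" "a' < q" "u a \<noteq> u a'"
  shows "1 \<le> card {x. x < q \<and> u x + c \<noteq> 0}"
proof -
  have "u a + c \<noteq> 0 \<or> u a' + c \<noteq> 0" using assms(3) by linarith
  then have "{x. x < q \<and> u x + c \<noteq> 0} \<noteq> {}" using assms(1,2) by auto
  then show ?thesis by (simp add: Suc_le_eq card_gt_0_iff)
qed

lemma sum_support_const_left:
  assumes "2 \<le> q" and u: "\<And>a. a < q \<Longrightarrow> u a = t"
    and card: "card (sum_support q u v) \<le> 2 * (q - 1)"
  shows "(\<forall>a<q. \<forall>b<q. u a + v b = 0)
    \<or> (\<exists>k<q. \<exists>c. c \<noteq> 0 \<and> (\<forall>a<q. \<forall>b<q. u a + v b = (if b = k then c else 0)))"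
proof -
  define B where "B = {b. b < q \<and> t + v b \<noteq> 0}"
  have "sum_support q u v = {..<q} \<times> B"
    using u by (auto simp: sum_support_def B_def)
  then have "q * card B \<le> 2 * (q - 1)"
    using card by (simp add: card_cartesian_product)
  then have "card B \<le> 1"
    using assms(1) mult_le_mono2[of 2 "card B" q] by linarith
  moreover have "finite B" by (simp add: B_def)
  ultimately have "B = {} \<or> (\<exists>k. B = {k})"
    by (metis One_nat_def card_0_eq card_1_singletonE le_Suc_eq le_zero_eq)
  then show ?thesis
  proof
    assume "B = {}"
    then show ?thesis using u by (intro disjI1) (auto simp: B_def)
  next
    assume "\<exists>k. B = {k}"
    then obtain k where "B = {k}" by blast
    then have "k < q" "t + v k \<noteq> 0" and "\<And>b. b < q \<Longrightarrow> b \<noteq> k \<Longrightarrow> t + v b = 0"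
      using insertI1[of k "{}"] by (auto simp: B_def)
    then show ?thesis
      using u by (intro disjI2 exI[of _ k] exI[of _ "t + v k"] conjI) auto
  qed
qed

lemma sum_support_const_right:
  fixes u v :: "nat \<Rightarrow> real"
  assumes "2 \<le> q" and "\<And>b. b < q \<Longrightarrow> v b = s"
    and "card (sum_support q u v) \<le> 2 * (q - 1)"
  shows "(\<forall>a<q. \<forall>b<q. u a + v b = 0)
    \<or> (\<exists>k<q. \<exists>c. c \<noteq> 0 \<and> (\<forall>a<q. \<forall>b<q. u a + v b = (if a = k then c else 0)))"
proof -
  have comm: "v b + u a = u a + v b" for a b by (rule add.commute)
  have "card (sum_support q v u) \<le> 2 * (q - 1)"
    using assms(3) card_sum_support_commute[of q u v] by linarith
  from sum_support_const_left[OF assms(1,2) this] show ?thesis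
    unfolding comm by blast
qed

lemma almost_const_of_card_sum_support:
  assumes nonconst: "a < q" "a' < q" "u a \<noteq> u a'"
    and card: "card (sum_support q u v) \<le> 2 * (q - 1)"
  shows "\<exists>t a1. a1 < q \<and> u a1 \<noteq> t \<and> (\<forall>a<q. a \<noteq> a1 \<longrightarrow> u a = t)"
proof -
  let ?C = "\<lambda>b. {x. x < q \<and> u x + v b \<noteq> 0}"
  obtain b0 where "b0 < q" "card (?C b0) \<le> 1"
  proof (rule ccontr)
    assume "\<not> thesis"
    then have "\<And>b. b < q \<Longrightarrow> 2 \<le> card (?C b)" using that by fastforce
    then have "(q - 1) * 2 + 2 \<le> card (sum_support q u v)"
      using nonconst(1) by (intro card_sum_support_ge[of 0]) auto
    then show False using card by linarith
  qed
  moreover have "1 \<le> card (?C b0)" using card_column_ge_one nonconst by blast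
  ultimately obtain a1 where "?C b0 = {a1}"
    by (metis card_1_singletonE le_antisym)
  then have "a1 < q" "u a1 \<noteq> - v b0" "\<forall>a<q. a \<noteq> a1 \<longrightarrow> u a = - v b0"
    by (auto simp: set_eq_iff eq_neg_iff_add_eq_0)
  then show ?thesis by blast
qed

lemma spikes_balanced:
  fixes u v :: "nat \<Rightarrow> real"
  assumes "a1 < q" "b1 < q"
    and u: "\<And>a. a < q \<Longrightarrow> a \<noteq> a1 \<Longrightarrow> u a = t" and "u a1 \<noteq> t"
    and v: "\<And>b. b < q \<Longrightarrow> b \<noteq> b1 \<Longrightarrow> v b = - t" and "v b1 \<noteq> - t"
    and card: "card (sum_support q u v) \<le> 2 * (q - 1)"
  shows "\<exists>k<q. \<exists>m<q. \<exists>c. c \<noteq> 0 \<and> (\<forall>a<q. \<forall>b<q. u a + v b =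
    (if a = k \<and> b \<noteq> m then c else if b = m \<and> a \<noteq> k then - c else 0))"
proof -
  have corner: "u a1 + v b1 = 0"
  proof (rule ccontr)
    assume "u a1 + v b1 \<noteq> 0"
    then have "{a. a < q \<and> u a + v b1 \<noteq> 0} = {..<q}"
      using u assms(6) by fastforce
    moreover have "1 \<le> card {a. a < q \<and> u a + v b \<noteq> 0}" if "b < q" "b \<noteq> b1" for b
    proof -
      have "a1 \<in> {a. a < q \<and> u a + v b \<noteq> 0}" using assms(1,4) v[OF that] by auto
      then show ?thesis by (simp add: Suc_le_eq card_gt_0_iff) blast
    qed
    ultimately have "(q - 1) * 1 + q \<le> card (sum_support q u v)"
      using assms(2) by (intro card_sum_support_ge) auto
    then show False using card assms(1) by linarith
  qed
  have "\<forall>a<q. \<forall>b<q. u a + v b = (if a = a1 \<and> b \<noteq> b1 then u a1 - t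
      else if b = b1 \<and> a \<noteq> a1 then - (u a1 - t) else 0)"
  proof (intro allI impI)
    fix a b assume "a < q" "b < q"
    then show "u a + v b = (if a = a1 \<and> b \<noteq> b1 then u a1 - t
        else if b = b1 \<and> a \<noteq> a1 then - (u a1 - t) else 0)"
      using u[of a] v[of b] corner by (cases "a = a1"; cases "b = b1") auto
  qed
  moreover have "u a1 - t \<noteq> 0" using assms(4) by simp
  ultimately show ?thesis
    using assms(1,2) by (intro exI[of _ a1] exI[of _ b1] exI[of _ "u a1 - t"] conjI) auto
qed

lemma spike_cancels:
  fixes u v :: "nat \<Rightarrow> real"
  assumes nonconst: "a < q" "a' < q" "u a \<noteq> u a'" and "b1 < q"
    and u: "\<And>a. a < q \<Longrightarrow> a \<noteq> a1 \<Longrightarrow> u a = t"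
    and v: "\<And>b. b < q \<Longrightarrow> b \<noteq> b1 \<Longrightarrow> v b = s" and "t + s \<noteq> 0"
    and card: "card (sum_support q u v) \<le> 2 * (q - 1)"
  shows "u a1 + s = 0"
proof (rule ccontr)
  assume "u a1 + s \<noteq> 0"
  then have "{x. x < q \<and> u x + v b \<noteq> 0} = {..<q}" if "b < q" "b \<noteq> b1" for b
    using u v[OF that] assms(7) by fastforce
  moreover have "1 \<le> card {x. x < q \<and> u x + v b1 \<noteq> 0}"
    using card_column_ge_one nonconst by blast
  ultimately have "(q - 1) * q + 1 \<le> card (sum_support q u v)"
    using assms(4) by (intro card_sum_support_ge) auto
  moreover have "2 \<le> q" using nonconst by (cases "a = a'") auto
  then have "(q - 1) * 2 \<le> (q - 1) * q" by simp
  ultimately show False using card by linarith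
qed

lemma spikes_unbalanced_card:
  fixes u v :: "nat \<Rightarrow> real"
  assumes "a1 < q" "b1 < q"
    and u: "\<And>a. a < q \<Longrightarrow> a \<noteq> a1 \<Longrightarrow> u a = t"
    and v: "\<And>b. b < q \<Longrightarrow> b \<noteq> b1 \<Longrightarrow> v b = s" and "t + s \<noteq> 0"
    and "u a1 + v b1 \<noteq> 0"
    and card: "card (sum_support q u v) \<le> 2 * (q - 1)"
  shows "q \<le> 2"
proof (rule ccontr)
  assume "\<not> q \<le> 2"
  have "q - 1 \<le> card {x. x < q \<and> u x + v b \<noteq> 0}" if "b < q" "b \<noteq> b1" for b
  proof -
    have "{..<q} - {a1} \<subseteq> {x. x < q \<and> u x + v b \<noteq> 0}"
      using u v[OF that] assms(5) by auto
    then show ?thesis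
      using assms(1) card_mono[of "{x. x < q \<and> u x + v b \<noteq> 0}" "{..<q} - {a1}"] by simp
  qed
  moreover have "1 \<le> card {x. x < q \<and> u x + v b1 \<noteq> 0}"
    using assms(1,6) by (simp add: Suc_le_eq card_gt_0_iff) blast
  ultimately have "(q - 1) * (q - 1) + 1 \<le> card (sum_support q u v)"
    using assms(2) by (intro card_sum_support_ge) auto
  moreover have "(q - 1) * 2 \<le> (q - 1) * (q - 1)" using \<open>\<not> q \<le> 2\<close> by simp
  ultimately show False using card by linarith
qed

lemma spikes_unbalanced:
  fixes u v :: "nat \<Rightarrow> real"
  assumes "2 \<le> q"
    and u_nonconst: "\<exists>a<q. \<exists>a'<q. u a \<noteq> u a'" and v_nonconst: "\<exists>b<q. \<exists>b'<q. v b \<noteq> v b'"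
    and a1: "a1 < q" and u: "\<And>a. a < q \<Longrightarrow> a \<noteq> a1 \<Longrightarrow> u a = t"
    and b1: "b1 < q" and v: "\<And>b. b < q \<Longrightarrow> b \<noteq> b1 \<Longrightarrow> v b = s"
    and "t + s \<noteq> 0" and card: "card (sum_support q u v) \<le> 2 * (q - 1)"
  shows "\<exists>k<q. \<exists>m<q. \<exists>c. c \<noteq> 0 \<and> (\<forall>a<q. \<forall>b<q. u a + v b =
    (if a = k \<and> b \<noteq> m then c else if b = m \<and> a \<noteq> k then - c else 0))"
proof -
  have "u a1 + s = 0"
  proof -
    from u_nonconst obtain a a' where "a < q" "a' < q" "u a \<noteq> u a'" by blast
    from this b1 u v \<open>t + s \<noteq> 0\<close> card show ?thesis
      by (rule spike_cancels)
  qed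
  moreover have "v b1 + t = 0"
  proof -
    have "s + t \<noteq> 0" using \<open>t + s \<noteq> 0\<close> by (simp add: add.commute)
    have card': "card (sum_support q v u) \<le> 2 * (q - 1)"
      using card card_sum_support_commute[of q u v] by linarith
    from v_nonconst obtain b b' where "b < q" "b' < q" "v b \<noteq> v b'" by blast
    from this a1 v u \<open>s + t \<noteq> 0\<close> card' show ?thesis
      by (rule spike_cancels)
  qed
  ultimately have "u a1 = - s" "v b1 = - t" by (simp_all add: eq_neg_iff_add_eq_0)
  then have "u a1 + v b1 \<noteq> 0" using \<open>t + s \<noteq> 0\<close> by simp
  with a1 b1 u v \<open>t + s \<noteq> 0\<close> have "q \<le> 2"
    using card by (rule spikes_unbalanced_card)
  then have "q = 2" using assms(1) by simp
  \<comment> \<open>For q = 2 the spike of u sits equally well at the other index k, which makes t + s vanish.\<close>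
  define k where "k = 1 - a1"
  have k: "k < q" "k \<noteq> a1" "\<And>a. a < q \<Longrightarrow> a \<noteq> k \<Longrightarrow> a = a1"
    using \<open>q = 2\<close> a1 unfolding k_def by auto presburger+
  have u': "\<And>a. a < q \<Longrightarrow> a \<noteq> k \<Longrightarrow> u a = - s" and "u k \<noteq> - s"
    using k u[OF k(1,2)] \<open>u a1 = - s\<close> \<open>t + s \<noteq> 0\<close> by (auto simp: eq_neg_iff_add_eq_0)
  have v': "\<And>b. b < q \<Longrightarrow> b \<noteq> b1 \<Longrightarrow> v b = - (- s)" and "v b1 \<noteq> - (- s)"
    using v \<open>v b1 = - t\<close> \<open>t + s \<noteq> 0\<close> by (auto simp: eq_neg_iff_add_eq_0)
  from k(1) b1 u' \<open>u k \<noteq> - s\<close> v' \<open>v b1 \<noteq> - (- s)\<close> card show ?thesis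
    by (rule spikes_balanced)
qed

lemma sum_support_classification:
  fixes u v :: "nat \<Rightarrow> real"
  assumes q: "2 \<le> q" and card: "card (sum_support q u v) \<le> 2 * (q - 1)"
  shows "(\<forall>a<q. \<forall>b<q. u a + v b = 0)
    \<or> (\<exists>k<q. \<exists>c. c \<noteq> 0 \<and> (\<forall>a<q. \<forall>b<q. u a + v b = (if a = k then c else 0)))
    \<or> (\<exists>k<q. \<exists>c. c \<noteq> 0 \<and> (\<forall>a<q. \<forall>b<q. u a + v b = (if b = k then c else 0)))
    \<or> (\<exists>k<q. \<exists>m<q. \<exists>c. c \<noteq> 0 \<and> (\<forall>a<q. \<forall>b<q. u a + v b =
         (if a = k \<and> b \<noteq> m then c else if b = m \<and> a \<noteq> k then - c else 0)))"
proof -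
  have "0 < q" using q by simp
  have card': "card (sum_support q v u) \<le> 2 * (q - 1)"
    using card card_sum_support_commute[of q u v] by linarith
  consider (u_const) "\<And>a. a < q \<Longrightarrow> u a = u 0"
    | (v_const) "\<And>b. b < q \<Longrightarrow> v b = v 0"
    | (spiked) "\<exists>a<q. \<exists>a'<q. u a \<noteq> u a'" "\<exists>b<q. \<exists>b'<q. v b \<noteq> v b'"
    using \<open>0 < q\<close> by blast
  then show ?thesis
  proof cases
    case u_const
    from sum_support_const_left[OF q this card] show ?thesis by blast
  next
    case v_const
    from sum_support_const_right[OF q this card] show ?thesis by blast
  next
    case spiked
    obtain t a1 where a1: "a1 < q" "u a1 \<noteq> t" and u: "\<And>a. a < q \<Longrightarrow> a \<noteq> a1 \<Longrightarrow> u a = t"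
      using spiked(1) almost_const_of_card_sum_support[OF _ _ _ card] by metis
    obtain s b1 where b1: "b1 < q" "v b1 \<noteq> s" and v: "\<And>b. b < q \<Longrightarrow> b \<noteq> b1 \<Longrightarrow> v b = s"
      using spiked(2) almost_const_of_card_sum_support[OF _ _ _ card'] by metis
    have "\<exists>k<q. \<exists>m<q. \<exists>c. c \<noteq> 0 \<and> (\<forall>a<q. \<forall>b<q. u a + v b =
        (if a = k \<and> b \<noteq> m then c else if b = m \<and> a \<noteq> k then - c else 0))"
    proof (cases "t + s = 0")
      case True
      then have "\<And>b. b < q \<Longrightarrow> b \<noteq> b1 \<Longrightarrow> v b = - t" and "v b1 \<noteq> - t"
        using v b1(2) by (simp_all add: eq_neg_iff_add_eq_0 add.commute)
      with a1 b1(1) u card show ?thesis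
        by (intro spikes_balanced[where u = u and v = v and t = t]) auto
    next
      case False
      from q spiked a1(1) u b1(1) v False card show ?thesis
        by (rule spikes_unbalanced)
    qed
    then show ?thesis by (intro disjI2)
  qed
qed

lemma hamming_vertices_two_iff:
  "x \<in> hamming_vertices 2 q \<longleftrightarrow> (\<exists>a b. x = [a, b] \<and> a < q \<and> b < q)"
proof
  assume "x \<in> hamming_vertices 2 q"
  then have "length x = 2" and "set x \<subseteq> {..<q}" by (auto simp: hamming_vertices_def)
  then show "\<exists>a b. x = [a, b] \<and> a < q \<and> b < q"
    by (auto simp: length_Suc_conv numeral_2_eq_2)
next
  assume "\<exists>a b. x = [a, b] \<and> a < q \<and> b < q"
  then show "x \<in> hamming_vertices 2 q" by (auto simp: hamming_vertices_def)
qed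

lemma ball_hamming_vertices_two:
  "(\<forall>x\<in>hamming_vertices 2 q. P x) \<longleftrightarrow> (\<forall>a<q. \<forall>b<q. P [a, b])"
  by (auto simp: hamming_vertices_two_iff)

lemma mem_T_two: "[a, b] \<in> T q k i 2 \<longleftrightarrow> a < q \<and> b < q \<and> [a, b] ! (i - 1) = k"
  by (simp add: T_def hamming_vertices_def)

lemma card_support_two:
  "card (support 2 q f) = card {(a, b). a < q \<and> b < q \<and> f [a, b] \<noteq> 0}"
proof -
  have "support 2 q f = (\<lambda>(a, b). [a, b]) ` {(a, b). a < q \<and> b < q \<and> f [a, b] \<noteq> 0}"
    by (auto simp: support_def hamming_vertices_two_iff)
  moreover have "inj (\<lambda>(a::nat, b::nat). [a, b])" by (auto simp: inj_def)
  ultimately show ?thesis by (simp add: card_image inj_on_subset)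
qed

lemma additive_two_eq:
  assumes "additive 2 q f" "a < q" "b < q"
  shows "f [a, b] = f [a, 0] + (f [0, b] - f [0, 0])"
proof -
  obtain c where c: "\<forall>t\<in>hamming_vertices 1 q. g_fun f 1 a 0 t = c"
    using assms unfolding additive_def by fastforce
  moreover have "[b] \<in> hamming_vertices 1 q" "[0] \<in> hamming_vertices 1 q"
    using assms(2,3) by (auto simp: hamming_vertices_def)
  ultimately have "g_fun f 1 a 0 [b] = g_fun f 1 a 0 [0]" by simp
  then show ?thesis by (simp add: g_fun_def insert_coord_def)
qed

theorem lemma3:
  fixes q :: nat and f :: "nat list \<Rightarrow> real"
  assumes "q \<ge> 2"
    and "additive 2 q f"
    and "card (support 2 q f) \<le> 2 * (q - 1)"
  shows "(\<forall>x\<in>hamming_vertices 2 q. f x = 0)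
    \<or> (\<exists>i\<in>{1,2}. \<exists>k<q. \<exists>c::real. c \<noteq> 0 \<and>
          (\<forall>x\<in>hamming_vertices 2 q. f x = (if x \<in> T q k i 2 then c else 0)))
    \<or> (\<exists>i\<in>{1,2}. \<exists>j\<in>{1,2}. i \<noteq> j \<and> (\<exists>k<q. \<exists>m<q. \<exists>c::real. c \<noteq> 0 \<and>
          (\<forall>x\<in>hamming_vertices 2 q.
             f x = (if x \<in> T q k i 2 - T q m j 2 then c
                    else if x \<in> T q m j 2 - T q k i 2 then - c else 0))))"
proof -
  define u where "u a = f [a, 0]" for a
  define v where "v b = f [0, b] - f [0, 0]" for b
  have f_eq: "f [a, b] = u a + v b" if "a < q" "b < q" for a b
    using additive_two_eq[OF assms(2) that] by (simp add: u_def v_def)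
  have "sum_support q u v = {(a, b). a < q \<and> b < q \<and> f [a, b] \<noteq> 0}"
    by (auto simp: sum_support_def f_eq)
  then have "card (sum_support q u v) \<le> 2 * (q - 1)"
    using assms(3) by (simp add: card_support_two)
  from sum_support_classification[OF assms(1) this] show ?thesis
  proof (elim disjE exE conjE)
    assume "\<forall>a<q. \<forall>b<q. u a + v b = 0"
    then show ?thesis by (simp add: ball_hamming_vertices_two f_eq)
  next
    fix k c assume "k < q" "c \<noteq> 0" "\<forall>a<q. \<forall>b<q. u a + v b = (if a = k then c else 0)"
    moreover from this(3) have
      "\<forall>x\<in>hamming_vertices 2 q. f x = (if x \<in> T q k 1 2 then c else 0)"
      by (simp add: ball_hamming_vertices_two f_eq mem_T_two)
    ultimately show ?thesis
      by (intro disjI2 disjI1 bexI[of _ 1]) auto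
  next
    fix k c assume "k < q" "c \<noteq> 0" "\<forall>a<q. \<forall>b<q. u a + v b = (if b = k then c else 0)"
    moreover from this(3) have
      "\<forall>x\<in>hamming_vertices 2 q. f x = (if x \<in> T q k 2 2 then c else 0)"
      by (simp add: ball_hamming_vertices_two f_eq mem_T_two)
    ultimately show ?thesis
      by (intro disjI2 disjI1 bexI[of _ 2]) auto
  next
    fix k m c assume km: "k < q" "m < q" and "c \<noteq> 0" and "\<forall>a<q. \<forall>b<q. u a + v b =
      (if a = k \<and> b \<noteq> m then c else if b = m \<and> a \<noteq> k then - c else 0)"
    then have "\<forall>x\<in>hamming_vertices 2 q. f x = (if x \<in> T q k 1 2 - T q m 2 2 then c
        else if x \<in> T q m 2 2 - T q k 1 2 then - c else 0)"
      by (simp add: ball_hamming_vertices_two f_eq mem_T_two)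
    with km \<open>c \<noteq> 0\<close> show ?thesis
      by (intro disjI2 bexI[of _ 1] bexI[of _ 2]) auto
  qed
qed

end
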